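(* Let $m\ge1$ and consider a preferential (dynamic) attachment circuit of index $m$. For $0\le j\le n$ let $D^{(m)}_{n,j}$ be the degree (indegree plus outdegree, edges counted with multiplicity) of node $j$ at time $n$. Then for $n\ge j$, $$\mathbb{E}\bigl[D^{(m)}_{n,j}\bigr]=\frac{\Gamma(n+1)\,\Gamma\bigl(j+\frac1{m+1}\bigr)}{\Gamma\bigl(n+\frac1{m+1}\bigr)\,\Gamma(j+1)}-1+m(1-\delta_{j,0}),$$ and $$\mathbb{V}\mathrm{ar}\bigl[D^{(m)}_{n,j}\bigr]=\frac{\Gamma(n+1)}{((m+1)j+1)\,\Gamma^2\bigl(n+\frac1{m+1}\bigr)\,\Gamma^2(j+1)\,\Gamma\bigl(n+\frac2{m+1}\bigr)}\times\Bigl\{2((m+1)n+1)\,\Gamma(j+1)\,\Gamma^2\bigl(n+\tfrac1{m+1}\bigr)\,\Gamma\bigl(j+\tfrac2{m+1}\bigr)$$ $$-((m+1)j+1)\Bigl[\Gamma(n+1)\,\Gamma\bigl(n+\tfrac2{m+1}\bigr)\,\Gamma^2\bigl(j+\tfrac1{m+1}\bigr)+\Gamma\bigl(n+\tfrac2{m+1}\bigr)\,\Gamma\bigl(n+\tfrac1{m+1}\bigr)\,\Gamma(j+1)\,\Gamma\bigl(j+\tfrac1{m+1}\bigr)\Bigr]\Bigr\}.$$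
   Context: Preferential (dynamic) attachment circuit of index $m\ge1$: at time $0$ there is a single node labeled $0$. At each time $n\ge1$ a new node labeled $n$ is added and $m$ parents are chosen for it one at a time, with replacement, among nodes $0,\dots,n-1$. Before the $(i+1)$-th choice ($i=0,\dots,m-1$), each existing node $v$ is chosen with probability $\frac{d_i(v)+1}{\sum_{x}(d_i(x)+1)}$, where $d_i(x)$ is the outdegree of $x$ in the current multigraph including the edges created by the first $i$ choices for node $n$; after each choice an edge from the chosen parent to node $n$ is immediately added (multi-edges allowed). $\delta_{j,0}$ is the Kronecker delta. *)

theory Defs
  imports "HOL-Probability.Probability" "HOL-Analysis.Analysis"
begin

text \<open>A multigraph is a multiset of directed edges (parent, child).\<close>
type_synonym graph = "(nat \<times> nat) multiset"

definition outdeg :: "graph \<Rightarrow> nat \<Rightarrow> nat" where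
  "outdeg E v = size (filter_mset (\<lambda>e. fst e = v) E)"

definition indeg :: "graph \<Rightarrow> nat \<Rightarrow> nat" where
  "indeg E v = size (filter_mset (\<lambda>e. snd e = v) E)"

definition degree :: "graph \<Rightarrow> nat \<Rightarrow> nat" where
  "degree E v = indeg E v + outdeg E v"

text \<open>Choose a parent among nodes 0..k-1, node v with probability
  (outdeg v + 1) / sum_x (outdeg x + 1): uniform draw from the multiset in which
  v occurs outdeg v + 1 times.\<close>
definition choose_parent :: "nat \<Rightarrow> graph \<Rightarrow> nat pmf" where
  "choose_parent k E = pmf_of_multiset (\<Sum>v\<in>{0..<k}. replicate_mset (outdeg E v + 1) v)"

fun add_edges :: "nat \<Rightarrow> graph \<Rightarrow> nat \<Rightarrow> graph pmf" where
  "add_edges k E 0 = return_pmf E"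
| "add_edges k E (Suc i) =
     add_edges k E i \<bind> (\<lambda>E'. map_pmf (\<lambda>v. add_mset (v, k) E') (choose_parent k E'))"

fun pac :: "nat \<Rightarrow> nat \<Rightarrow> graph pmf" where
  "pac m 0 = return_pmf {#}"
| "pac m (Suc n) = pac m n \<bind> (\<lambda>E. add_edges (Suc n) E m)"

end

theory Submission
  imports Defs
begin

text \<open>Let \<open>X = outdeg j + 1\<close> be the weight of node \<open>j\<close> in the urn from which parents are
  drawn. A single draw from an urn of total weight \<open>S\<close> raises \<open>X\<close> by one with probability
  \<open>X / S\<close>; since \<open>x (pochhammer (x + 1) r - pochhammer x r) = r pochhammer x r\<close>, every draw
  multiplies the rising factorial moment \<open>E[pochhammer X r]\<close> by \<open>(S + r) / S\<close>. The total
  weight is deterministic (before the \<open>i\<close>-th choice of node \<open>t + 1\<close> it is \<open>(m + 1) t + 1 + i\<close>),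
  so these moments are products over the steps after time \<open>j\<close>, which telescope into quotients of
  Gamma values with shifts in steps of \<open>1 / (m + 1)\<close>. The degree of \<open>j\<close> is \<open>X - 1\<close> plus the
  deterministic indegree, so its mean and variance follow from the moments of order 1 and 2.\<close>

abbreviation parent_urn :: "nat \<Rightarrow> graph \<Rightarrow> nat multiset" where
  "parent_urn k E \<equiv> \<Sum>v\<in>{0..<k}. replicate_mset (outdeg E v + 1) v"

lemma expectation_cong_set_pmf:
  "(\<And>x. x \<in> set_pmf p \<Longrightarrow> f x = g x) \<Longrightarrow>
     measure_pmf.expectation p f = (measure_pmf.expectation p g :: real)"
  by (rule integral_cong_AE) (auto simp: AE_measure_pmf_iff)

lemma expectation_bind_pmf_finite:
  fixes h :: "'b \<Rightarrow> real"
  assumes "finite (set_pmf p)" and "\<And>x. x \<in> set_pmf p \<Longrightarrow> finite (set_pmf (f x))"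
  shows "measure_pmf.expectation (p \<bind> f) h =
           measure_pmf.expectation p (\<lambda>x. measure_pmf.expectation (f x) h)"
  using assms
  by (subst pmf_expectation_bind[of "set_pmf p"], simp_all, subst integral_measure_pmf[of "set_pmf p"]) auto

lemma outdeg_add_mset: "outdeg (add_mset e E) v = outdeg E v + (if fst e = v then 1 else 0)"
  by (simp add: outdeg_def)

lemma indeg_union: "indeg (A + B) v = indeg A v + indeg B v"
  by (simp add: indeg_def)

lemma sum_outdeg_eq_size:
  "\<forall>e\<in>#E. fst e < k \<Longrightarrow> (\<Sum>v<k. outdeg E v) = size E"
proof (induction E)
  case empty
  then show ?case by (simp add: outdeg_def)
next
  case (add e E)
  then show ?case by (simp add: outdeg_add_mset sum.distrib)
qed

lemma count_parent_urn:
  "count (parent_urn k E) j = (if j < k then outdeg E j + 1 else 0)"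
  by (simp add: count_sum count_replicate_mset if_distrib cong: if_cong)

lemma set_mset_parent_urn:
  "set_mset (parent_urn k E) = {..<k}"
  by (rule set_eqI) (simp only: count_greater_zero_iff[symmetric] count_parent_urn, simp)

lemma set_pmf_choose_parent:
  assumes "0 < k"
  shows "set_pmf (choose_parent k E) = {..<k}"
proof -
  have urn_nonempty: "parent_urn k E \<noteq> {#}"
    using assms set_mset_parent_urn[where k = k and E = E] by (metis lessThan_iff set_mset_empty empty_iff)
  show ?thesis
    unfolding choose_parent_def by (simp only: set_pmf_of_multiset[OF urn_nonempty] set_mset_parent_urn)
qed

lemma size_parent_urn:
  assumes "\<forall>e\<in>#E. fst e < k"
  shows "size (parent_urn k E) = size E + k"
proof -
  have "size (parent_urn k E) = (\<Sum>v<k. outdeg E v + 1)"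
    by (simp add: atLeast0LessThan del: replicate_mset_Suc)
  also have "\<dots> = size E + k"
    using sum_outdeg_eq_size[OF assms] by (simp only: sum.distrib) simp
  finally show ?thesis .
qed

lemma pmf_choose_parent:
  assumes "\<forall>e\<in>#E. fst e < k" and "j < k"
  shows "pmf (choose_parent k E) j = real (outdeg E j + 1) / real (size E + k)"
proof -
  have urn_nonempty: "parent_urn k E \<noteq> {#}"
    using count_parent_urn[where k = k and E = E and j = j] assms(2) by auto
  show ?thesis
    unfolding choose_parent_def using assms(2)
    by (simp only: pmf_of_multiset[OF urn_nonempty] count_parent_urn size_parent_urn[OF assms(1)]) simp
qed

lemma pochhammer_Suc_diff:
  fixes x :: "'a::comm_ring_1"
  shows "x * (pochhammer (x + 1) r - pochhammer x r) = of_nat r * pochhammer x r"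
proof -
  have "x * pochhammer (x + 1) r = (x + of_nat r) * pochhammer x r"
    using pochhammer_rec[of x r] pochhammer_rec'[of x r] by simp
  then show ?thesis by (simp add: algebra_simps)
qed

lemma expectation_choose_parent_pochhammer:
  assumes "\<forall>e\<in>#E. fst e < k" and "j < k"
  shows "measure_pmf.expectation (choose_parent k E)
           (\<lambda>v. pochhammer (real (outdeg (add_mset (v, k) E) j) + 1) r)
         = pochhammer (real (outdeg E j) + 1) r * (real (size E + k) + real r) / real (size E + k)"
proof -
  define x where "x = real (outdeg E j) + 1"
  define S where "S = real (size E + k)"
  let ?p = "choose_parent k E"
  have S_pos: "S > 0" using assms(2) by (simp add: S_def)
  have "measure_pmf.expectation ?p (\<lambda>v. pochhammer (real (outdeg (add_mset (v, k) E) j) + 1) r)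
      = measure_pmf.expectation ?p
          (\<lambda>v. pochhammer x r + (if v = j then pochhammer (x + 1) r - pochhammer x r else 0))"
    by (rule expectation_cong_set_pmf) (simp add: outdeg_add_mset x_def add_ac)
  also have "\<dots> = pochhammer x r + measure_pmf.expectation ?p
          (\<lambda>v. if v = j then pochhammer (x + 1) r - pochhammer x r else 0)"
    using assms(2)
    by (subst Bochner_Integration.integral_add)
       (auto intro!: integrable_measure_pmf_finite simp: set_pmf_choose_parent)
  also have "measure_pmf.expectation ?p
          (\<lambda>v. if v = j then pochhammer (x + 1) r - pochhammer x r else 0)
      = (pochhammer (x + 1) r - pochhammer x r) * pmf ?p j"
    by (subst integral_measure_pmf_real[of "{j}"]) (auto split: if_splits)
  also have "pmf ?p j = x / S"
    using pmf_choose_parent[OF assms] by (simp add: x_def S_def add_ac)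
  also have "pochhammer x r + (pochhammer (x + 1) r - pochhammer x r) * (x / S)
      = pochhammer x r * (S + real r) / S"
    using pochhammer_Suc_diff[of x r] S_pos by (simp add: field_simps)
  finally show ?thesis by (simp add: x_def S_def)
qed

lemma finite_set_pmf_add_edges: "0 < k \<Longrightarrow> finite (set_pmf (add_edges k E i))"
  by (induction i) (auto simp: set_pmf_choose_parent)

lemma set_pmf_add_edges:
  assumes "0 < k" and "E' \<in> set_pmf (add_edges k E i)"
  shows "\<exists>A. E' = E + A \<and> size A = i \<and> (\<forall>e\<in>#A. fst e < k \<and> snd e = k)"
  using assms(2)
proof (induction i arbitrary: E')
  case 0
  then show ?case by simp
next
  case (Suc i)
  then obtain E'' v where "E'' \<in> set_pmf (add_edges k E i)" and "v < k" and "E' = add_mset (v, k) E''"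
    using assms(1) by (auto simp: set_pmf_choose_parent)
  with Suc.IH obtain A where "E'' = E + A" "size A = i" "\<forall>e\<in>#A. fst e < k \<and> snd e = k"
    by blast
  with \<open>v < k\<close> \<open>E' = add_mset (v, k) E''\<close> show ?case
    by (intro exI[of _ "add_mset (v, k) A"]) auto
qed

lemma expectation_add_edges_pochhammer:
  assumes "\<forall>e\<in>#E. fst e < k" and "j < k"
  shows "measure_pmf.expectation (add_edges k E i) (\<lambda>E'. pochhammer (real (outdeg E' j) + 1) r)
         = pochhammer (real (outdeg E j) + 1) r
           * pochhammer (real (size E + k) + real r) i / pochhammer (real (size E + k)) i"
proof (induction i)
  case 0
  then show ?case by simp
next
  case (Suc i)
  define S where "S = real (size E + k)"
  have k_pos: "0 < k" using assms(2) by simp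
  have "measure_pmf.expectation (add_edges k E (Suc i)) (\<lambda>E'. pochhammer (real (outdeg E' j) + 1) r)
      = measure_pmf.expectation (add_edges k E i) (\<lambda>E''. measure_pmf.expectation (choose_parent k E'')
          (\<lambda>v. pochhammer (real (outdeg (add_mset (v, k) E'') j) + 1) r))"
    by (simp only: add_edges.simps, subst expectation_bind_pmf_finite)
       (simp_all add: finite_set_pmf_add_edges[OF k_pos] set_pmf_choose_parent[OF k_pos])
  also have "\<dots> = measure_pmf.expectation (add_edges k E i)
      (\<lambda>E''. pochhammer (real (outdeg E'' j) + 1) r * ((S + real i + real r) / (S + real i)))"
  proof (rule expectation_cong_set_pmf)
    fix E'' assume "E'' \<in> set_pmf (add_edges k E i)"
    with set_pmf_add_edges[OF k_pos] obtain A
      where "E'' = E + A" "size A = i" "\<forall>e\<in>#A. fst e < k \<and> snd e = k"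
      by blast
    then have E''_parents: "\<forall>e\<in>#E''. fst e < k" and E''_weight: "real (size E'' + k) = S + real i"
      using assms(1) by (auto simp: S_def)
    then show "measure_pmf.expectation (choose_parent k E'')
          (\<lambda>v. pochhammer (real (outdeg (add_mset (v, k) E'') j) + 1) r)
        = pochhammer (real (outdeg E'' j) + 1) r * ((S + real i + real r) / (S + real i))"
      by (simp only: expectation_choose_parent_pochhammer[OF E''_parents assms(2)] E''_weight) simp
  qed
  also have "\<dots> = measure_pmf.expectation (add_edges k E i) (\<lambda>E''. pochhammer (real (outdeg E'' j) + 1) r)
      * ((S + real i + real r) / (S + real i))"
    by simp
  also have "\<dots> = pochhammer (real (outdeg E j) + 1) r
      * pochhammer (S + real r) (Suc i) / pochhammer S (Suc i)"
  proof -
    have "S + real i > 0" and "pochhammer S i > 0"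
      using k_pos by (auto simp: S_def intro!: pochhammer_pos)
    then show ?thesis
      using Suc.IH[folded S_def] by (simp add: pochhammer_Suc add_ac)
  qed
  finally show ?case by (simp add: S_def)
qed

lemma finite_set_pmf_pac: "finite (set_pmf (pac m n))"
  by (induction n) (auto simp: finite_set_pmf_add_edges)

lemma set_pmf_pac:
  assumes "E \<in> set_pmf (pac m n)"
  shows "size E = m * n" and "\<forall>e\<in>#E. fst e < snd e \<and> snd e \<le> n"
    and "indeg E v = (if 1 \<le> v \<and> v \<le> n then m else 0)"
proof -
  have "size E = m * n \<and> (\<forall>e\<in>#E. fst e < snd e \<and> snd e \<le> n)
    \<and> (\<forall>v. indeg E v = (if 1 \<le> v \<and> v \<le> n then m else 0))"
    using assms
  proof (induction n arbitrary: E)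
    case 0
    then show ?case by (simp add: indeg_def)
  next
    case (Suc n)
    then obtain E0 where E0: "E0 \<in> set_pmf (pac m n)" and "E \<in> set_pmf (add_edges (Suc n) E0 m)"
      by auto
    then obtain A where A: "E = E0 + A" "size A = m" "\<forall>e\<in>#A. fst e < Suc n \<and> snd e = Suc n"
      using set_pmf_add_edges[of "Suc n"] by blast
    have "indeg A v = (if v = Suc n then m else 0)" for v
    proof -
      have "filter_mset (\<lambda>e. snd e = v) A = (if v = Suc n then A else {#})"
        using A(3) by (auto simp: filter_mset_eq_conv)
      then show ?thesis using A(2) by (simp add: indeg_def)
    qed
    then show ?case
      using Suc.IH[OF E0] A by (auto simp: indeg_union le_Suc_eq)
  qed
  then show "size E = m * n" and "\<forall>e\<in>#E. fst e < snd e \<and> snd e \<le> n"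
    and "indeg E v = (if 1 \<le> v \<and> v \<le> n then m else 0)"
    by blast+
qed

lemma outdeg_newest_node_pac: "E \<in> set_pmf (pac m n) \<Longrightarrow> outdeg E n = 0"
  using set_pmf_pac(2) unfolding outdeg_def by fastforce

lemma pochhammer_ratio_swap:
  fixes S :: "'a::linordered_field"
  assumes "S > 0"
  shows "pochhammer (S + of_nat r) m / pochhammer S m = pochhammer (S + of_nat m) r / pochhammer S r"
proof -
  have "pochhammer S r * pochhammer (S + of_nat r) m = pochhammer S m * pochhammer (S + of_nat m) r"
    by (metis pochhammer_product' add.commute)
  moreover have "pochhammer S r > 0" "pochhammer S m > 0"
    using assms by (simp_all add: pochhammer_pos)
  ultimately show ?thesis by (simp add: field_simps)
qed

lemma pochhammer_ratio_pac_step: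
  fixes m t r :: nat
  defines "a \<equiv> 1 / (real m + 1)"
  shows "pochhammer (real (m * t + Suc t) + real r) m / pochhammer (real (m * t + Suc t)) m
       = (\<Prod>i<r. (real t + (1 + real i * a)) / (real t + (real i + 1) * a))"
proof -
  define S where "S = real (m * t + Suc t)"
  have "pochhammer (S + real r) m / pochhammer S m = pochhammer (S + real m) r / pochhammer S r"
    by (rule pochhammer_ratio_swap) (unfold S_def of_nat_0_less_iff, simp)
  also have "\<dots> = (\<Prod>i<r. (S + real m + real i) / (S + real i))"
    by (simp add: pochhammer_prod prod_dividef atLeast0LessThan)
  also have "\<dots> = (\<Prod>i<r. (real t + (1 + real i * a)) / (real t + (real i + 1) * a))"
  proof (rule prod.cong)
    fix i
    have "S + real m + real i = (real m + 1) * (real t + (1 + real i * a))"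
      and "S + real i = (real m + 1) * (real t + (real i + 1) * a)"
      by (simp_all add: S_def a_def field_simps)
    then show "(S + real m + real i) / (S + real i) = (real t + (1 + real i * a)) / (real t + (real i + 1) * a)"
      by simp
  qed simp
  finally show ?thesis by (simp add: S_def)
qed

lemma expectation_pac_pochhammer:
  fixes m n j r :: nat
  assumes "j \<le> n"
  defines "a \<equiv> 1 / (real m + 1)"
  shows "measure_pmf.expectation (pac m n) (\<lambda>E. pochhammer (real (outdeg E j) + 1) r)
       = fact r * (\<Prod>t\<in>{j..<n}. \<Prod>i<r. (real t + (1 + real i * a)) / (real t + (real i + 1) * a))"
  using assms(1)
proof (induction n rule: nat_induct_at_least)
  case base
  have "measure_pmf.expectation (pac m j) (\<lambda>E. pochhammer (real (outdeg E j) + 1) r)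
      = measure_pmf.expectation (pac m j) (\<lambda>E. pochhammer 1 r)"
    by (rule expectation_cong_set_pmf) (simp add: outdeg_newest_node_pac)
  then show ?case by (simp add: pochhammer_fact)
next
  case (Suc n)
  let ?f = "\<lambda>t. \<Prod>i<r. (real t + (1 + real i * a)) / (real t + (real i + 1) * a)"
  have "measure_pmf.expectation (pac m (Suc n)) (\<lambda>E. pochhammer (real (outdeg E j) + 1) r)
      = measure_pmf.expectation (pac m n) (\<lambda>E. measure_pmf.expectation (add_edges (Suc n) E m)
          (\<lambda>E'. pochhammer (real (outdeg E' j) + 1) r))"
    by (simp only: pac.simps, rule expectation_bind_pmf_finite)
       (simp_all add: finite_set_pmf_pac finite_set_pmf_add_edges)
  also have "\<dots> = measure_pmf.expectation (pac m n) (\<lambda>E. pochhammer (real (outdeg E j) + 1) r * ?f n)"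
  proof (rule expectation_cong_set_pmf)
    fix E assume E: "E \<in> set_pmf (pac m n)"
    have parents: "\<forall>e\<in>#E. fst e < Suc n"
      using set_pmf_pac(2)[OF E] by fastforce
    have weight: "size E + Suc n = m * n + Suc n"
      using set_pmf_pac(1)[OF E] by simp
    have "j < Suc n" using Suc.hyps by simp
    then show "measure_pmf.expectation (add_edges (Suc n) E m) (\<lambda>E'. pochhammer (real (outdeg E' j) + 1) r)
        = pochhammer (real (outdeg E j) + 1) r * ?f n"
      by (simp only: expectation_add_edges_pochhammer[OF parents] weight times_divide_eq_right[symmetric]
          pochhammer_ratio_pac_step a_def)
  qed
  also have "\<dots> = fact r * (\<Prod>t\<in>{j..<Suc n}. ?f t)"
    using Suc by (simp add: prod.atLeastLessThan_Suc)
  finally show ?case .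
qed

lemma prod_atLeastLessThan_plus_Gamma:
  fixes c :: real
  assumes "c > 0" and "j \<le> n"
  shows "(\<Prod>t\<in>{j..<n}. real t + c) = Gamma (real n + c) / Gamma (real j + c)"
  using assms(2)
proof (induction n rule: nat_induct_at_least)
  case base
  have "Gamma (real j + c) > 0" using assms(1) by simp
  then show ?case by simp
next
  case (Suc n)
  have "Gamma (real (Suc n) + c) = (real n + c) * Gamma (real n + c)"
    using Gamma_plus1[of "real n + c"] assms(1) by (simp add: nonpos_Ints_def add_ac)
  then show ?case
    using Suc by (simp add: prod.atLeastLessThan_Suc)
qed

lemma expectation_pac_pochhammer_Gamma:
  fixes m n j r :: nat
  assumes "j \<le> n"
  defines "a \<equiv> 1 / (real m + 1)"
  shows "measure_pmf.expectation (pac m n) (\<lambda>E. pochhammer (real (outdeg E j) + 1) r)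
       = fact r * (\<Prod>i<r. Gamma (real n + (1 + real i * a)) * Gamma (real j + (real i + 1) * a)
                          / (Gamma (real j + (1 + real i * a)) * Gamma (real n + (real i + 1) * a)))"
proof -
  have a_pos: "a > 0" by (simp add: a_def)
  have "(\<Prod>t\<in>{j..<n}. \<Prod>i<r. (real t + (1 + real i * a)) / (real t + (real i + 1) * a))
      = (\<Prod>i<r. (\<Prod>t\<in>{j..<n}. real t + (1 + real i * a)) / (\<Prod>t\<in>{j..<n}. real t + (real i + 1) * a))"
    by (simp add: prod.swap[of _ "{j..<n}"] prod_dividef)
  also have "\<dots> = (\<Prod>i<r. Gamma (real n + (1 + real i * a)) * Gamma (real j + (real i + 1) * a)
                          / (Gamma (real j + (1 + real i * a)) * Gamma (real n + (real i + 1) * a)))"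
  proof (rule prod.cong[OF refl])
    fix i
    have "1 + real i * a > 0" and "(real i + 1) * a > 0"
      using a_pos by (simp_all add: add_pos_nonneg)
    then show "(\<Prod>t\<in>{j..<n}. real t + (1 + real i * a)) / (\<Prod>t\<in>{j..<n}. real t + (real i + 1) * a)
      = Gamma (real n + (1 + real i * a)) * Gamma (real j + (real i + 1) * a)
          / (Gamma (real j + (1 + real i * a)) * Gamma (real n + (real i + 1) * a))"
      by (simp add: prod_atLeastLessThan_plus_Gamma[OF _ assms(1)])
  qed
  finally show ?thesis
    using expectation_pac_pochhammer[OF assms(1), of m r] by (simp add: a_def)
qed

lemma expectation_pac_outdeg:
  fixes m n j :: nat
  assumes "j \<le> n"
  defines "a \<equiv> 1 / (real m + 1)"
  shows "measure_pmf.expectation (pac m n) (\<lambda>E. real (outdeg E j) + 1)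
       = Gamma (real n + 1) * Gamma (real j + a) / (Gamma (real n + a) * Gamma (real j + 1))"
  using expectation_pac_pochhammer_Gamma[OF assms(1), of m 1] by (simp add: a_def ac_simps)

lemma expectation_pac_outdeg_rising_2:
  fixes m n j :: nat
  assumes "j \<le> n"
  defines "a \<equiv> 1 / (real m + 1)"
  defines "\<mu> \<equiv> Gamma (real n + 1) * Gamma (real j + a) / (Gamma (real n + a) * Gamma (real j + 1))"
  shows "measure_pmf.expectation (pac m n) (\<lambda>E. (real (outdeg E j) + 1) * (real (outdeg E j) + 2))
       = 2 * \<mu> * ((real n + a) * Gamma (real n + a) * Gamma (real j + 2 * a)
                    / ((real j + a) * Gamma (real j + a) * Gamma (real n + 2 * a)))"
proof -
  have "a > 0" by (simp add: a_def)
  then have "Gamma (real n + (1 + a)) = (real n + a) * Gamma (real n + a)"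
    and "Gamma (real j + (1 + a)) = (real j + a) * Gamma (real j + a)"
    and "Gamma (real n + a) > 0" and "Gamma (real j + a) > 0"
    using Gamma_plus1[of "real n + a"] Gamma_plus1[of "real j + a"]
    by (simp_all add: nonpos_Ints_def add_ac)
  moreover have "(\<lambda>E. (real (outdeg E j) + 1) * (real (outdeg E j) + 2))
      = (\<lambda>E. pochhammer (real (outdeg E j) + 1) 2)"
    by (simp add: numeral_2_eq_2 pochhammer_Suc algebra_simps)
  ultimately show ?thesis
    using expectation_pac_pochhammer_Gamma[OF assms(1), of m 2, folded a_def]
    by (simp add: \<mu>_def numeral_2_eq_2 mult_ac)
qed

lemma degree_pac:
  assumes "E \<in> set_pmf (pac m n)" and "j \<le> n"
  shows "degree E j = outdeg E j + (if j = 0 then 0 else m)"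
  using set_pmf_pac(3)[OF assms(1), of j] assms(2) by (simp add: degree_def)

lemma variance_formula_rearrangement:
  fixes M n j a A Na N2 J1 Ja J2 :: real
  assumes "a = 1 / (M + 1)" and "M \<ge> 0" and "j \<ge> 0"
    and "Na > 0" and "N2 > 0" and "J1 > 0" and "Ja > 0"
  defines "\<mu> \<equiv> A * Ja / (Na * J1)"
  shows "2 * \<mu> * ((n + a) * Na * J2 / ((j + a) * Ja * N2)) - \<mu> - \<mu>\<^sup>2
       = A / (((M + 1) * j + 1) * Na\<^sup>2 * J1\<^sup>2 * N2)
         * (2 * ((M + 1) * n + 1) * J1 * Na\<^sup>2 * J2
            - ((M + 1) * j + 1) * (A * N2 * Ja\<^sup>2 + N2 * Na * J1 * Ja))"
proof -
  define p where "p = (M + 1) * n + 1"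
  define q where "q = (M + 1) * j + 1"
  have "M + 1 > 0" and "(M + 1) * j \<ge> 0"
    using assms(2,3) by simp_all
  then have q_pos: "q > 0" and "j + a = q / (M + 1)" and "n + a = p / (M + 1)"
    unfolding p_def q_def assms(1) by (simp_all add: field_simps)
  then have "j + a > 0" and ratio: "(n + a) / (j + a) = p / q"
    using \<open>M + 1 > 0\<close> by simp_all
  have "2 * \<mu> * ((n + a) * Na * J2 / ((j + a) * Ja * N2)) = 2 * A * J2 / (J1 * N2) * ((n + a) / (j + a))"
    unfolding \<mu>_def using assms(4-7) \<open>j + a > 0\<close> by (simp add: divide_simps)
  also have "\<dots> = 2 * A * p * J2 / (q * J1 * N2)"
    unfolding ratio by (simp add: ac_simps)
  moreover have "A / (q * Na\<^sup>2 * J1\<^sup>2 * N2) * (2 * p * J1 * Na\<^sup>2 * J2 - q * (A * N2 * Ja\<^sup>2 + N2 * Na * J1 * Ja))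
      = 2 * A * p * J2 / (q * J1 * N2) - \<mu> - \<mu>\<^sup>2"
    unfolding \<mu>_def using assms(4-7) q_pos by (simp add: field_simps power2_eq_square)
  ultimately show ?thesis
    by (simp add: p_def q_def)
qed

theorem theorem4:
  fixes m n j :: nat
  assumes "m \<ge> 1" and "j \<le> n"
  defines "a \<equiv> 1 / (real m + 1)"
  shows "measure_pmf.expectation (pac m n) (\<lambda>E. real (degree E j)) =
           Gamma (real n + 1) * Gamma (real j + a) / (Gamma (real n + a) * Gamma (real j + 1))
           - 1 + real m * (1 - (if j = 0 then 1 else 0)) \<and>
         measure_pmf.variance (pac m n) (\<lambda>E. real (degree E j)) =
           Gamma (real n + 1) /
             (((real m + 1) * real j + 1) * (Gamma (real n + a))^2 * (Gamma (real j + 1))^2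
              * Gamma (real n + 2 * a))
           * (2 * ((real m + 1) * real n + 1) * Gamma (real j + 1) * (Gamma (real n + a))^2
                * Gamma (real j + 2 * a)
              - ((real m + 1) * real j + 1) *
                (Gamma (real n + 1) * Gamma (real n + 2 * a) * (Gamma (real j + a))^2
                 + Gamma (real n + 2 * a) * Gamma (real n + a) * Gamma (real j + 1)
                   * Gamma (real j + a)))"
proof -
  let ?p = "pac m n"
  define X where "X = (\<lambda>E. real (outdeg E j) + 1)"
  define c where "c = real m * (1 - (if j = 0 then 1 else 0))"
  define \<mu> where "\<mu> = Gamma (real n + 1) * Gamma (real j + a) / (Gamma (real n + a) * Gamma (real j + 1))"
  have integrable: "integrable (measure_pmf ?p) f" for f :: "graph \<Rightarrow> real"
    by (rule integrable_measure_pmf_finite[OF finite_set_pmf_pac])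
  have degree: "real (degree E j) = X E + (c - 1)" if "E \<in> set_pmf ?p" for E
    using degree_pac[OF that assms(2)] by (simp add: X_def c_def)
  have first_moment: "measure_pmf.expectation ?p X = \<mu>"
    unfolding X_def \<mu>_def a_def by (rule expectation_pac_outdeg[OF assms(2)])
  have mean: "measure_pmf.expectation ?p (\<lambda>E. real (degree E j)) = \<mu> - 1 + c"
    using expectation_cong_set_pmf[of ?p, OF degree] first_moment integrable by simp
  have "measure_pmf.variance ?p (\<lambda>E. real (degree E j)) = measure_pmf.variance ?p X"
    by (rule expectation_cong_set_pmf) (simp add: degree mean first_moment)
  also have "\<dots> = measure_pmf.expectation ?p (\<lambda>E. X E * (X E + 1)) - \<mu> - \<mu>\<^sup>2"
    using first_moment integrable by (simp add: measure_pmf.variance_eq power2_eq_square algebra_simps)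
  also have "measure_pmf.expectation ?p (\<lambda>E. X E * (X E + 1))
      = 2 * \<mu> * ((real n + a) * Gamma (real n + a) * Gamma (real j + 2 * a)
                   / ((real j + a) * Gamma (real j + a) * Gamma (real n + 2 * a)))"
    using expectation_pac_outdeg_rising_2[OF assms(2), of m] unfolding X_def \<mu>_def a_def
    by (simp add: add_ac)
  finally have variance: "measure_pmf.variance ?p (\<lambda>E. real (degree E j))
      = 2 * \<mu> * ((real n + a) * Gamma (real n + a) * Gamma (real j + 2 * a)
                   / ((real j + a) * Gamma (real j + a) * Gamma (real n + 2 * a))) - \<mu> - \<mu>\<^sup>2" .
  have "a > 0" by (simp add: a_def)
  show ?thesis
    unfolding variance unfolding mean \<mu>_def c_def
  proof (rule conjI[OF refl variance_formula_rearrangement[where M = "real m"]])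
    show "a = 1 / (real m + 1)" by (simp add: a_def)
  qed (use \<open>a > 0\<close> in simp_all)
qed

end
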